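(* Consider the Jacobi matrix of Example 4.1 and let $x_0\in\mathbb{R}$. Suppose there are constants $C,D>0$ and $\alpha,\beta>0$ such that (i) for all $j\ge1$ and all $n\in C_j\cup A_{j+1}$, $|p_n(x_0)|\le C^{j+1}\exp(\alpha 2^{j^2})$; (ii) for all sufficiently large $j$, $\big(p_{n_j-1}(x_0)^2+p_{n_j}(x_0)^2\big)^{1/2}\ge D^{-(j+1)}\exp(\beta2^{j^2})$, where $n_j$ is the "center" of $C_j$. Then $\displaystyle \frac{p_n(x_0)^2}{\sum_{k=0}^n p_k(x_0)^2}$ does not tend to $0$ as $n\to\infty$ (so the Nevai condition fails at $x_0$).
   Context: Example 4.1: partition $\{1,2,\dots\}$ into successive consecutive blocks $A_1,C_1,A_2,C_2,\dots$ with $\#A_j=3^{j^2}$ and $\#C_j=2^{j^2}$; the Jacobi parameters are $b_n=0$ for all $n$, $a_n=1$ for $n\in A_j$, $a_n=\tfrac12$ for $n\in C_j$. $p_n$ ($n\ge0$) are the orthonormal polynomials defined by $p_{-1}=0$, $p_0=1$, $xp_n=a_{n+1}p_{n+1}+b_{n+1}p_n+a_np_{n-1}$. If $C_j=\{m_j+1,\dots,m_j+2^{j^2}\}$, its "center" is $n_j=m_j+\tfrac12 2^{j^2}$. The Nevai condition at $x_0$ means $K_n(x,x_0)^2\,d\rho(x)/K_n(x_0,x_0)\to\delta_{x_0}$ weakly, where $\rho$ is the orthogonality measure and $K_n(x,y)=\sum_{j=0}^np_j(x)p_j(y)$. *)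

theory Defs
  imports Complex_Main
begin

text \<open>Example 4.1: the positive integers are partitioned into consecutive blocks
  A_1, C_1, A_2, C_2, ... with #A_j = 3^(j^2), #C_j = 2^(j^2) (j >= 1).\<close>

definition startA :: "nat \<Rightarrow> nat" where
  "startA j = (\<Sum>i\<in>{1..<j}. 3 ^ (i^2) + 2 ^ (i^2))"

definition blockA :: "nat \<Rightarrow> nat set" where
  "blockA j = {startA j + 1 .. startA j + 3 ^ (j^2)}"

definition mC :: "nat \<Rightarrow> nat" where
  "mC j = startA j + 3 ^ (j^2)"

definition blockC :: "nat \<Rightarrow> nat set" where
  "blockC j = {mC j + 1 .. mC j + 2 ^ (j^2)}"

text \<open>center n_j = m_j + 2^(j^2)/2 of C_j (an integer since j >= 1)\<close>
definition centerC :: "nat \<Rightarrow> nat" where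
  "centerC j = mC j + 2 ^ (j^2) div 2"

text \<open>Jacobi parameters: b_n = 0, a_n = 1 on the A-blocks and 1/2 on the C-blocks
  (only n >= 1 is relevant).\<close>
definition jac_a :: "nat \<Rightarrow> real" where
  "jac_a n = (if \<exists>j\<ge>1. n \<in> blockC j then 1/2 else 1)"

text \<open>Orthonormal polynomials: p_{-1} = 0, p_0 = 1,
  x p_n = a_{n+1} p_{n+1} + b_{n+1} p_n + a_n p_{n-1} with b = 0.\<close>
fun jac_p :: "nat \<Rightarrow> real \<Rightarrow> real" where
  "jac_p 0 x = 1"
| "jac_p (Suc 0) x = x / jac_a 1"
| "jac_p (Suc (Suc n)) x =
     (x * jac_p (Suc n) x - jac_a (Suc n) * jac_p n x) / jac_a (Suc (Suc n))"

end

theory Submission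
  imports Defs "HOL-Real_Asymp.Real_Asymp"
begin

(*
  Write S n = p_0^2 + ... + p_n^2 with p_n = p_n(x0).  If p_n^2 / S n \<rightarrow> 0,
  then eventually S (n+1) \<le> e^\<beta> S n, so the partial sums grow at most like e^(\<beta> h)
  over h further steps.  The centre n_j of C_j lies only 2^(j^2)/2 steps after the
  block start m_j, hence
     D^(-2(j+1)) e^(2\<beta> 2^(j^2)) \<le> p_(n_j-1)^2 + p_(n_j)^2 \<le> S n_j \<le> e^(\<beta> 2^(j^2)/2) S m_j
  by (ii).  Hypothesis (i) bounds every p_k with k \<le> m_j by K C^j e^(\<alpha> 2^((j-1)^2)), and
  m_j + 1 \<le> (2j+2) 3^(j^2), so S m_j is only e^(o(2^(j^2))); this contradicts the
  display for large j.
*)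

lemma startA_Suc: "j \<ge> 1 \<Longrightarrow> startA (Suc j) = startA j + 3 ^ (j^2) + 2 ^ (j^2)"
  unfolding startA_def by (simp add: atLeastLessThanSuc)

lemma block_cover:
  assumes "j \<ge> 1" "mC j < k" "k \<le> mC (Suc j)"
  shows "k \<in> blockC j \<union> blockA (j + 1)"
  using assms startA_Suc[OF assms(1)] unfolding blockC_def blockA_def mC_def by auto

lemma mC_lower: "j \<le> mC j"
proof -
  have "j \<le> j^2" by (simp add: power2_eq_square)
  also have "j^2 < 2^(j^2)" by (rule less_exp)
  also have "(2::nat)^(j^2) \<le> 3^(j^2)" by (simp add: power_mono)
  finally show ?thesis unfolding mC_def by simp
qed

text \<open>The number of indices up to m_j is at most (2j+2) 3^(j^2) = e^(o(2^(j^2))).\<close>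
lemma mC_upper: "mC j + 1 \<le> (2*j+2) * 3^(j^2)"
proof -
  have block_le: "(3::nat) ^ (i^2) + 2 ^ (i^2) \<le> 2 * 3 ^ (j^2)" if "i \<in> {1..<j}" for i
  proof -
    have "(3::nat) ^ (i^2) \<le> 3 ^ (j^2)"
      using that by (intro power_increasing power_mono) auto
    moreover have "(2::nat) ^ (i^2) \<le> 3 ^ (i^2)" by (simp add: power_mono)
    ultimately show ?thesis by linarith
  qed
  have "startA j \<le> of_nat (card {1..<j}) * (2 * 3^(j^2))"
    unfolding startA_def by (rule sum_bounded_above) (use block_le in auto)
  also have "\<dots> \<le> j * (2 * 3^(j^2))" by simp
  finally have "startA j \<le> j * (2 * 3^(j^2))" .
  moreover have "(2*j+2) * 3^(j^2) = j * (2 * 3^(j^2)) + 3^(j^2) + (3::nat)^(j^2)"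
    by (simp add: algebra_simps)
  moreover have "(1::nat) \<le> 3^(j^2)" by simp
  ultimately show ?thesis unfolding mC_def by linarith
qed

section \<open>Hypothesis (i) controls all p_k up to m_j\<close>

text \<open>Inductively over the blocks: the indices in (m_j, m_(j+1)] are covered by (i),
  and the bound K C'^j e^(\<alpha> 2^((j-1)^2)) is monotone in j.\<close>
lemma prefix_bound:
  fixes p :: "nat \<Rightarrow> real" and C \<alpha> :: real
  assumes "C > 0" "\<alpha> \<ge> 0"
    and i: "\<And>j n. j \<ge> 1 \<Longrightarrow> n \<in> blockC j \<union> blockA (j + 1) \<Longrightarrow>
              \<bar>p n\<bar> \<le> C ^ (j + 1) * exp (\<alpha> * 2 ^ (j^2))"
  obtains K where "K \<ge> 1"
    "\<And>j k. j \<ge> 1 \<Longrightarrow> k \<le> mC j \<Longrightarrow> \<bar>p k\<bar> \<le> K * max 1 C ^ j * exp (\<alpha> * 2 ^ ((j-1)^2))"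
proof
  define C' where "C' = max 1 C"
  define K where "K = Max (insert 1 ((\<lambda>k. \<bar>p k\<bar>) ` {..mC 1}))"
  show K_ge: "K \<ge> 1" unfolding K_def by simp
  have C'_ge: "C' \<ge> 1" "C \<le> C'" unfolding C'_def by auto
  define bnd where "bnd j = K * C' ^ j * exp (\<alpha> * 2 ^ ((j-1)^2))" for j
  have bnd_mono: "bnd j \<le> bnd (Suc j)" for j
  proof -
    have "(2::real) ^ ((j-1)^2) \<le> 2 ^ ((Suc j - 1)^2)"
      by (intro power_increasing power_mono) auto
    hence "exp (\<alpha> * 2 ^ ((j-1)^2)) \<le> exp (\<alpha> * 2 ^ ((Suc j - 1)^2))"
      using \<open>\<alpha> \<ge> 0\<close> by (simp add: mult_left_mono)
    moreover have "C' ^ j \<le> C' ^ Suc j" using C'_ge by (simp add: power_increasing)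
    ultimately show ?thesis
      unfolding bnd_def using K_ge C'_ge by (intro mult_mono) auto
  qed
  have "\<forall>k\<le>mC j. \<bar>p k\<bar> \<le> bnd j" if "j \<ge> 1" for j
    using that
  proof (induction j rule: nat_induct_at_least)
    case base
    have "1 * 1 \<le> C' * exp \<alpha>"
      using C'_ge \<open>\<alpha> \<ge> 0\<close> by (intro mult_mono) auto
    hence "K \<le> K * (C' * exp \<alpha>)"
      using K_ge by (simp add: mult_le_cancel_left1)
    moreover have "\<bar>p k\<bar> \<le> K" if "k \<le> mC 1" for k
      unfolding K_def using that by (intro Max_ge) auto
    ultimately show ?case unfolding bnd_def by force
  next
    case (Suc j)
    have "\<bar>p k\<bar> \<le> bnd (Suc j)" if k: "k \<le> mC (Suc j)" "\<not> k \<le> mC j" for k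
    proof -
      have "\<bar>p k\<bar> \<le> C ^ (j + 1) * exp (\<alpha> * 2 ^ (j^2))"
        using i block_cover Suc.hyps k by simp
      also have "C ^ (j + 1) \<le> K * C' ^ Suc j"
      proof -
        have "C ^ (j + 1) \<le> C' ^ Suc j" using power_mono[of C C' "Suc j"] \<open>C > 0\<close> C'_ge by simp
        also have "\<dots> \<le> K * C' ^ Suc j" using K_ge C'_ge by simp
        finally show ?thesis .
      qed
      hence "C ^ (j + 1) * exp (\<alpha> * 2 ^ (j^2)) \<le> bnd (Suc j)"
        unfolding bnd_def by simp
      finally show ?thesis .
    qed
    then show ?case using Suc.IH bnd_mono by (meson order_trans not_le_imp_less less_imp_le)
  qed
  then show "\<bar>p k\<bar> \<le> K * max 1 C ^ j * exp (\<alpha> * 2 ^ ((j-1)^2))"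
    if "j \<ge> 1" "k \<le> mC j" for j k
    using that unfolding bnd_def C'_def by blast
qed

text \<open>The envelope K M^j (2j+2) 3^(j^2) e^(c 2^((j-1)^2)) for the energy p_0^2 + ... + p_(m_j)^2;
  every factor is e^(o(2^(j^2))).\<close>
definition energy_envelope :: "real \<Rightarrow> real \<Rightarrow> real \<Rightarrow> nat \<Rightarrow> real" where
  "energy_envelope K M c j = K * M ^ j * (real (2*j+2) * 3 ^ (j^2)) * exp (c * 2 ^ ((j-1)^2))"

lemma prefix_energy_bound:
  fixes p :: "nat \<Rightarrow> real" and C \<alpha> :: real
  assumes "C > 0" "\<alpha> \<ge> 0"
    and i: "\<And>j n. j \<ge> 1 \<Longrightarrow> n \<in> blockC j \<union> blockA (j + 1) \<Longrightarrow>
              \<bar>p n\<bar> \<le> C ^ (j + 1) * exp (\<alpha> * 2 ^ (j^2))"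
  obtains K where "K > 0"
    "\<And>j. j \<ge> 1 \<Longrightarrow> (\<Sum>k\<le>mC j. (p k)^2) \<le> energy_envelope K (max 1 C ^ 2) (2 * \<alpha>) j"
proof -
  obtain K where K: "K \<ge> 1"
    "\<And>j k. j \<ge> 1 \<Longrightarrow> k \<le> mC j \<Longrightarrow> \<bar>p k\<bar> \<le> K * max 1 C ^ j * exp (\<alpha> * 2 ^ ((j-1)^2))"
    using prefix_bound[where p = p, OF assms(1,2) i] by blast
  show ?thesis
  proof
    show "K^2 > 0" using K(1) by simp
    fix j :: nat assume "j \<ge> 1"
    define B where "B = K * max 1 C ^ j * exp (\<alpha> * 2 ^ ((j-1)^2))"
    have "(\<Sum>k\<le>mC j. (p k)^2) \<le> card {..mC j} * B^2"
    proof (rule sum_bounded_above)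
      fix k assume "k \<in> {..mC j}"
      hence "\<bar>p k\<bar> \<le> B" using K(2) \<open>j \<ge> 1\<close> unfolding B_def by simp
      thus "(p k)^2 \<le> B^2" by (metis abs_ge_zero power2_abs power_mono)
    qed
    also have "\<dots> \<le> real ((2*j+2) * 3^(j^2)) * B^2"
      using mC_upper[of j]
      by (intro mult_right_mono) (simp_all only: card_atMost Suc_eq_plus1 of_nat_le_iff zero_le_power2)
    also have "\<dots> = energy_envelope (K^2) (max 1 C ^ 2) (2 * \<alpha>) j"
    proof -
      have sq_pow: "(max 1 C ^ j)^2 = (max 1 C ^ 2) ^ j"
        by (metis power_mult mult.commute)
      have sq_exp: "exp (\<alpha> * 2 ^ ((j-1)^2))^2 = exp (2 * \<alpha> * 2 ^ ((j-1)^2))"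
        by (metis exp_double mult.assoc)
      have "B^2 = K^2 * (max 1 C ^ 2) ^ j * exp (2 * \<alpha> * 2 ^ ((j-1)^2))"
        unfolding B_def power_mult_distrib sq_pow sq_exp ..
      then show ?thesis unfolding energy_envelope_def
        by (simp only: of_nat_mult of_nat_power of_nat_numeral mult_ac)
    qed
    finally show "(\<Sum>k\<le>mC j. (p k)^2) \<le> energy_envelope (K^2) (max 1 C ^ 2) (2 * \<alpha>) j" .
  qed
qed

section \<open>Partial sums of a sequence whose last term is negligible grow subexponentially\<close>

lemma partial_sums_subexponential:
  fixes a :: "nat \<Rightarrow> real" and \<beta> :: real
  assumes nonneg: "\<And>k. a k \<ge> 0" and "a 0 > 0" and "\<beta> > 0"
    and lim: "(\<lambda>n. a n / (\<Sum>k\<le>n. a k)) \<longlonglongrightarrow> 0"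
  obtains N where "\<And>m h. m \<ge> N \<Longrightarrow> (\<Sum>k\<le>m+h. a k) \<le> exp (\<beta> * h) * (\<Sum>k\<le>m. a k)"
proof -
  define S where "S n = (\<Sum>k\<le>n. a k)" for n
  have S_pos: "S n > 0" for n
  proof -
    have "a 0 \<le> S n" unfolding S_def using nonneg by (intro member_le_sum) auto
    thus ?thesis using \<open>a 0 > 0\<close> by simp
  qed
  have "1 - exp (-\<beta>) > 0" using \<open>\<beta> > 0\<close> by simp
  from order_tendstoD(2)[OF lim this] obtain N
    where N: "\<And>n. n \<ge> N \<Longrightarrow> a n / S n < 1 - exp (-\<beta>)"
    by (auto simp: eventually_sequentially S_def)
  have step: "S (Suc m) \<le> exp \<beta> * S m" if "m \<ge> N" for m
  proof -
    have "a (Suc m) < (1 - exp (-\<beta>)) * S (Suc m)"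
      using N[of "Suc m"] that S_pos[of "Suc m"] by (simp add: divide_less_eq)
    moreover have "S (Suc m) = S m + a (Suc m)" unfolding S_def by simp
    ultimately have "exp (-\<beta>) * S (Suc m) < S m" by (simp add: algebra_simps)
    thus ?thesis by (simp add: exp_minus field_simps)
  qed
  have "S (m + h) \<le> exp (\<beta> * h) * S m" if "m \<ge> N" for m h
  proof (induction h)
    case (Suc h)
    have "S (m + Suc h) \<le> exp \<beta> * S (m + h)" using step \<open>m \<ge> N\<close> by simp
    also have "\<dots> \<le> exp \<beta> * (exp (\<beta> * h) * S m)" using Suc by simp
    also have "\<dots> = exp (\<beta> * Suc h) * S m" by (simp add: mult_exp_exp algebra_simps)
    finally show ?case .
  qed simp
  then show ?thesis unfolding S_def by (rule that)
qed

lemma energy_envelope_negligible: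
  fixes A B c \<gamma> :: real
  assumes "A > 0" "B > 0" "\<gamma> > 0"
  shows "\<forall>\<^sub>F j in sequentially. energy_envelope A B c j < exp (\<gamma> * 2 ^ (j^2))"
proof -
  define L where "L j = ln A + real j * ln B + ln (2 * real j + 2) + real j ^ 2 * ln 3
                          + c * 2 powr ((real j - 1)^2)" for j :: nat
  have "(\<lambda>j. L j / 2 powr (real j ^ 2)) \<longlonglongrightarrow> 0" unfolding L_def by real_asymp
  hence "\<forall>\<^sub>F j in sequentially. L j / 2 powr (real j ^ 2) < \<gamma>"
    using \<open>\<gamma> > 0\<close> by (rule order_tendstoD)
  moreover have "\<forall>\<^sub>F j in sequentially. j \<ge> 1" by (rule eventually_ge_at_top)
  ultimately show ?thesis
  proof eventually_elim
    case (elim j)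
    have X: "2 powr (real j ^ 2) = (2::real) ^ (j^2)"
      by (metis of_nat_numeral of_nat_power powr_realpow zero_less_numeral)
    have Y: "2 powr ((real j - 1)^2) = (2::real) ^ ((j-1)^2)"
      using \<open>j \<ge> 1\<close> by (metis of_nat_1 of_nat_diff of_nat_power powr_realpow zero_less_numeral)
    have "exp (real j * ln B) = B ^ j" using \<open>B > 0\<close> by (simp add: exp_of_nat_mult)
    moreover have "exp (real j ^ 2 * ln 3) = 3 ^ (j^2)"
      using exp_of_nat_mult[of "j^2" "ln (3::real)"] by simp
    moreover have "exp (ln (2 * real j + 2)) = real (2*j+2)" by simp
    ultimately have "exp (L j) = energy_envelope A B c j"
      unfolding L_def Y energy_envelope_def using \<open>A > 0\<close> by (simp add: exp_add)
    moreover have "L j < \<gamma> * 2 ^ (j^2)"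
      using elim(1) by (simp add: X divide_less_eq)
    ultimately show ?case by (metis exp_less_mono)
  qed
qed

lemma energy_envelope_scale:
  "D^2 * (D^2)^j * energy_envelope K M c j = energy_envelope (D^2 * K) (D^2 * M) c j"
  unfolding energy_envelope_def power_mult_distrib by (simp only: mult_ac)

text \<open>The centre n_j is reached from m_j in at most 2^(j^2)/2 steps, so subexponential growth
  of the partial sums transfers a bound R on the energy up to m_j to the centre.\<close>
lemma center_energy:
  fixes p :: "nat \<Rightarrow> real" and \<beta> :: real and N j :: nat
  assumes "\<beta> \<ge> 0" "mC j \<ge> N" "j \<ge> 1"
    and growth: "\<And>m h. m \<ge> N \<Longrightarrow> (\<Sum>k\<le>m+h. (p k)^2) \<le> exp (\<beta> * h) * (\<Sum>k\<le>m. (p k)^2)"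
    and prefix: "(\<Sum>k\<le>mC j. (p k)^2) \<le> R"
  shows "(p (centerC j - 1))^2 + (p (centerC j))^2 \<le> exp (\<beta> * 2 ^ (j^2) / 2) * R"
proof -
  define h where "h = (2::nat) ^ (j^2) div 2"
  have center: "centerC j = mC j + h" unfolding centerC_def h_def ..
  have "centerC j \<ge> 1" using mC_lower[of j] \<open>j \<ge> 1\<close> center by simp
  hence "(p (centerC j - 1))^2 + (p (centerC j))^2 = (\<Sum>k\<in>{centerC j - 1, centerC j}. (p k)^2)"
    by simp
  also have "\<dots> \<le> (\<Sum>k\<le>centerC j. (p k)^2)" by (rule sum_mono2) auto
  also have "\<dots> \<le> exp (\<beta> * h) * (\<Sum>k\<le>mC j. (p k)^2)"
    unfolding center using growth \<open>mC j \<ge> N\<close> .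
  also have "\<dots> \<le> exp (\<beta> * 2 ^ (j^2) / 2) * (\<Sum>k\<le>mC j. (p k)^2)"
  proof -
    have "real h \<le> 2 ^ (j^2) / 2"
      unfolding h_def using of_nat_div_le_of_nat[of "(2::nat)^(j^2)" 2] by simp
    hence "\<beta> * h \<le> \<beta> * 2 ^ (j^2) / 2"
      using mult_left_mono[OF _ \<open>\<beta> \<ge> 0\<close>] by fastforce
    thus ?thesis by (intro mult_right_mono) (auto simp: sum_nonneg)
  qed
  also have "\<dots> \<le> exp (\<beta> * 2 ^ (j^2) / 2) * R" using prefix by simp
  finally show ?thesis .
qed

lemma center_bounds_rescaled:
  fixes D \<beta> X E R :: real and j :: nat
  assumes "D > 0"
    and lower: "inverse (D ^ (j + 1)) * exp (\<beta> * X) \<le> sqrt E"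
    and upper: "E \<le> exp (\<beta> * X / 2) * R"
  shows "exp (3 * \<beta> / 2 * X) \<le> D^2 * (D^2)^j * R"
proof -
  define P where "P = D^2 * (D^2)^j"
  have "P > 0" unfolding P_def using \<open>D > 0\<close> by simp
  have "exp (\<beta> * X)^2 = exp (2 * (\<beta> * X))" by (rule exp_double[symmetric])
  also have "2 * (\<beta> * X) = \<beta> * X / 2 + 3 * \<beta> / 2 * X" by (simp add: field_simps)
  also have "exp \<dots> = exp (\<beta> * X / 2) * exp (3 * \<beta> / 2 * X)" by (rule exp_add)
  finally have exp_sq: "exp (\<beta> * X)^2 = exp (\<beta> * X / 2) * exp (3 * \<beta> / 2 * X)" .
  have P_eq: "(D ^ (j + 1))^2 = P" unfolding P_def power_Suc2[of D j, unfolded Suc_eq_plus1]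
    by (metis power_mult power_mult_distrib mult.commute)
  have "exp (\<beta> * X / 2) * exp (3 * \<beta> / 2 * X) / P = (inverse (D ^ (j + 1)) * exp (\<beta> * X))^2"
    unfolding power_mult_distrib power_inverse exp_sq P_eq divide_inverse_commute ..
  also have "\<dots> \<le> (sqrt E)^2"
    using lower \<open>D > 0\<close> by (intro power_mono) auto
  also have "\<dots> = E"
  proof -
    have "0 < inverse (D ^ (j + 1)) * exp (\<beta> * X)" using \<open>D > 0\<close> by simp
    hence "0 < sqrt E" using lower by linarith
    thus ?thesis by simp
  qed
  also have "\<dots> \<le> exp (\<beta> * X / 2) * R" by (rule upper)
  finally have "exp (\<beta> * X / 2) * exp (3 * \<beta> / 2 * X) \<le> exp (\<beta> * X / 2) * R * P"
    using \<open>P > 0\<close> by (simp add: pos_divide_le_eq)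
  hence "exp (3 * \<beta> / 2 * X) \<le> R * P" by (simp add: mult.assoc)
  thus ?thesis unfolding P_def by (simp only: mult.commute)
qed

theorem proposition4p3:
  fixes x0 C D \<alpha> \<beta> :: real
  assumes "C > 0" and "D > 0" and "\<alpha> > 0" and "\<beta> > 0"
    and i: "\<And>j n. j \<ge> 1 \<Longrightarrow> n \<in> blockC j \<union> blockA (j + 1) \<Longrightarrow>
              \<bar>jac_p n x0\<bar> \<le> C ^ (j + 1) * exp (\<alpha> * 2 ^ (j^2))"
    and ii: "\<forall>\<^sub>F j in sequentially.
              sqrt ((jac_p (centerC j - 1) x0)^2 + (jac_p (centerC j) x0)^2)
                \<ge> inverse (D ^ (j + 1)) * exp (\<beta> * 2 ^ (j^2))"
  shows "\<not> ((\<lambda>n. (jac_p n x0)^2 / (\<Sum>k\<le>n. (jac_p k x0)^2)) \<longlonglongrightarrow> 0)"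
proof
  define p where "p n = jac_p n x0" for n
  define M where "M = max 1 C ^ 2"
  assume "(\<lambda>n. (jac_p n x0)^2 / (\<Sum>k\<le>n. (jac_p k x0)^2)) \<longlonglongrightarrow> 0"
  then obtain N where growth:
      "\<And>m h. m \<ge> N \<Longrightarrow> (\<Sum>k\<le>m+h. (p k)^2) \<le> exp (\<beta> * h) * (\<Sum>k\<le>m. (p k)^2)"
    using partial_sums_subexponential[of "\<lambda>k. (p k)^2" \<beta>] \<open>\<beta> > 0\<close> unfolding p_def by auto
  obtain K where "K > 0" and prefix:
      "\<And>j. j \<ge> 1 \<Longrightarrow> (\<Sum>k\<le>mC j. (p k)^2) \<le> energy_envelope K M (2 * \<alpha>) j"
    using prefix_energy_bound[where p = p, OF \<open>C > 0\<close> _ i[folded p_def]] \<open>\<alpha> > 0\<close>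
    unfolding M_def by auto
  have "0 < D^2 * K" "0 < D^2 * M" "0 < 3 * \<beta> / 2"
    using \<open>D > 0\<close> \<open>K > 0\<close> \<open>\<beta> > 0\<close> unfolding M_def by auto
  from energy_envelope_negligible[OF this, of "2 * \<alpha>"]
  have dominated: "\<forall>\<^sub>F j in sequentially.
      D^2 * (D^2)^j * energy_envelope K M (2 * \<alpha>) j < exp (3 * \<beta> / 2 * 2 ^ (j^2))"
    unfolding energy_envelope_scale .
  obtain j where j: "j \<ge> max 1 N"
    and small: "D^2 * (D^2)^j * energy_envelope K M (2 * \<alpha>) j < exp (3 * \<beta> / 2 * 2 ^ (j^2))"
    and lower: "inverse (D ^ (j + 1)) * exp (\<beta> * 2 ^ (j^2))
                  \<le> sqrt ((p (centerC j - 1))^2 + (p (centerC j))^2)"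
    using eventually_conj[OF eventually_conj[OF eventually_ge_at_top[of "max 1 N"] dominated] ii]
    unfolding eventually_sequentially p_def by auto
  have "(p (centerC j - 1))^2 + (p (centerC j))^2
          \<le> exp (\<beta> * 2 ^ (j^2) / 2) * energy_envelope K M (2 * \<alpha>) j"
    using \<open>\<beta> > 0\<close> j mC_lower[of j] by (intro center_energy growth prefix) auto
  with \<open>D > 0\<close> lower have "exp (3 * \<beta> / 2 * 2 ^ (j^2)) \<le> D^2 * (D^2)^j * energy_envelope K M (2 * \<alpha>) j"
    by (intro center_bounds_rescaled)
  with small show False by simp
qed

end
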